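(* Let $P=\{\bm{x}_1,\dots,\bm{x}_N\}$ be a population of $N$ solutions and let $\pi:\{1,\dots,N\}\to\{1,\dots,N\}$ be a bijection satisfying $\forall i\neq j:\ \bm{x}_i\succ_{\mathrm{c}}\bm{x}_j \Rightarrow \pi(i)<\pi(j)$. Consider one application of stochastic tournament selection to $P$ (with the winner being the picked solution of smallest $\pi$-value). Then: (i) every solution $\bm{x}_i\in P$ is selected with probability at least $1/N^2$; (ii) for every constant $c\ge 1$ there is a constant $\delta>0$ (independent of $N$) such that every $\bm{x}_i\in P$ with $\pi(i)\le c$ is selected with probability at least $\delta$.
   Context: Crowded comparison: each solution $\bm{x}$ of a population has a rank $\mathrm{rank}(\bm{x})$ (index of its non-dominated front) and a crowding distance $\mathrm{dist}(\bm{x})$; $\bm{x}\succ_{\mathrm{c}}\bm{y}$ means $\mathrm{rank}(\bm{x})<\mathrm{rank}(\bm{y})$, or $\mathrm{rank}(\bm{x})=\mathrm{rank}(\bm{y})$ and $\mathrm{dist}(\bm{x})>\mathrm{dist}(\bm{y})$. Stochastic tournament selection on a population $P$ of size $N$: choose $k$ uniformly at random from $\{1,2,\dots,N\}$, then pick $k$ solutions from $P$ independently and uniformly at random with replacement, and output the picked solution that is best, i.e. the one with smallest $\pi$-value, where $\pi$ is a bijection as in the claim (solutions with identical rank and crowding distance receive their relative $\pi$-order uniformly at random). *)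

theory Defs
  imports "HOL-Probability.Probability"
begin

text \<open>Population P = {x_1,...,x_N} is represented by its index set {1..N}.
  rk i and cdist i are the rank (non-dominated front index) and crowding
  distance of solution x_i.\<close>

definition crowded_better :: "(nat \<Rightarrow> nat) \<Rightarrow> (nat \<Rightarrow> real) \<Rightarrow> nat \<Rightarrow> nat \<Rightarrow> bool" where
  "crowded_better rk cdist i j \<longleftrightarrow>
     rk i < rk j \<or> (rk i = rk j \<and> cdist i > cdist j)"

definition stoch_tournament :: "nat \<Rightarrow> (nat \<Rightarrow> nat) \<Rightarrow> nat pmf" where
  "stoch_tournament N \<pi> =
     do { k \<leftarrow> pmf_of_set {1..N};
          picks \<leftarrow> replicate_pmf k (pmf_of_set {1..N});
          return_pmf (arg_min_list \<pi> picks) }"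

end

theory Submission
  imports Defs
begin

text \<open>If \<open>\<pi> i = q\<close>, the solution \<open>x\<^sub>i\<close> wins a tournament of size \<open>k\<close> as soon as all
  \<open>k\<close> picks lie among the \<open>N + 1 - q\<close> solutions of \<open>\<pi>\<close>-value at least \<open>q\<close> and \<open>x\<^sub>i\<close> is
  among them; this happens with probability \<open>a\<^sup>k - b\<^sup>k\<close>, where \<open>a = (N + 1 - q)/N\<close> and
  \<open>b = (N - q)/N\<close>. For \<open>k = 1\<close> this is \<open>1/N\<close>, which gives (i) after averaging over \<open>k\<close>.
  For \<open>2kq \<le> N\<close>, the bound \<open>a^k - b^k \<ge> k b^(k-1) (a - b) = k b^(k-1)/N\<close> and Bernoulli's
  inequality give at least \<open>k/(2N)\<close>; summing over these \<open>k\<close> and averaging yields the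
  bound \<open>1/(32 q\<^sup>2)\<close>, independent of \<open>N\<close>, hence (ii) with \<open>\<delta> = 1/(32 c\<^sup>2)\<close>.\<close>

lemma power_diff_ge:
  fixes a b :: "'a::linordered_idom"
  assumes "0 \<le> b" "b \<le> a"
  shows "of_nat k * b ^ (k - 1) * (a - b) \<le> a ^ k - b ^ k"
proof (cases k)
  case (Suc n)
  have "(\<Sum>p<Suc n. b ^ n) \<le> (\<Sum>p<Suc n. a ^ p * b ^ (n - p))"
  proof (rule sum_mono)
    fix p assume "p \<in> {..<Suc n}"
    then have "b ^ n = b ^ p * b ^ (n - p)" by (simp flip: power_add)
    also have "\<dots> \<le> a ^ p * b ^ (n - p)" using assms by (intro mult_right_mono power_mono) auto
    finally show "b ^ n \<le> a ^ p * b ^ (n - p)" .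
  qed
  then have "(a - b) * (\<Sum>p<Suc n. b ^ n) \<le> a ^ Suc n - b ^ Suc n"
    unfolding diff_power_eq_sum using assms by (intro mult_left_mono) auto
  then show ?thesis using Suc by (simp add: algebra_simps)
qed simp

definition win_prob :: "nat \<Rightarrow> nat \<Rightarrow> nat \<Rightarrow> real" where
  "win_prob N q k = ((real N + 1 - real q) / N) ^ k - ((real N - real q) / N) ^ k"

lemma win_prob_nonneg: "q \<le> N \<Longrightarrow> 0 \<le> win_prob N q k"
  unfolding win_prob_def by (auto intro!: power_mono divide_right_mono)

lemma win_prob_1: "win_prob N q 1 = 1 / N"
  unfolding win_prob_def by (cases "N = 0") (simp_all add: field_simps)

lemma win_prob_ge:
  assumes "0 < N" "2 * k * q \<le> N"
  shows "real k / (2 * real N) \<le> win_prob N q k"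
proof (cases k)
  case (Suc n)
  have "q \<le> 2 * k * q" using Suc by simp
  with assms(2) have qN: "q \<le> N" by linarith
  have kq: "2 * (real k * q) \<le> N" using assms(2) by (simp flip: of_nat_mult of_nat_le_iff)
  then have "-1 \<le> - real q / N" using assms Suc by (simp add: field_simps)
  then have "1 + real n * (- real q / N) \<le> (1 + - real q / N) ^ n"
    by (rule Bernoulli_inequality)
  moreover have "1 / 2 \<le> 1 + real n * (- real q / N)" using kq Suc assms(1) by (simp add: field_simps)
  moreover have "1 + - real q / N = (real N - real q) / N" using assms(1) by (simp add: field_simps)
  ultimately have half: "1 / 2 \<le> ((real N - real q) / N) ^ n" by (metis order.trans)
  have gap: "(real N + 1 - real q) / N - (real N - real q) / N = 1 / N"
    using assms(1) by (simp add: field_simps)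
  have "real k / (2 * real N) = real k * (1 / 2) * (1 / N)" by simp
  also have "\<dots> \<le> real k * ((real N - real q) / N) ^ (k - 1) * (1 / N)"
    using half Suc by (intro mult_right_mono mult_left_mono) auto
  also have "\<dots> \<le> win_prob N q k"
    unfolding win_prob_def gap[symmetric] using qN assms(1) by (intro power_diff_ge) (auto simp: field_simps)
  finally show ?thesis .
qed (simp add: win_prob_def)

lemma sum_win_prob_ge_inverse:
  assumes "1 \<le> N" "q \<le> N"
  shows "1 / N \<le> (\<Sum>k\<in>{1..N}. win_prob N q k)"
proof -
  have "win_prob N q 1 \<le> (\<Sum>k\<in>{1..N}. win_prob N q k)"
    by (rule member_le_sum) (use assms in \<open>auto simp: win_prob_nonneg\<close>)
  then show ?thesis by (simp only: win_prob_1)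
qed

lemma sum_win_prob_ge_triangular:
  assumes "1 \<le> q" "q \<le> N" "2 * q * K \<le> N"
  shows "real K * (real K + 1) / (4 * real N) \<le> (\<Sum>k\<in>{1..N}. win_prob N q k)"
proof -
  have "K \<le> 2 * q * K" using assms(1) by simp
  with assms(3) have K_le: "K \<le> N" by linarith
  have "real K * (real K + 1) = 2 * (\<Sum>k\<in>{1..K}. real k)"
    using double_gauss_sum_from_Suc_0[of K, where 'a = real] by simp
  then have "real K * (real K + 1) / (4 * real N) = (\<Sum>k\<in>{1..K}. real k / (2 * real N))"
    by (simp add: sum_divide_distrib[symmetric])
  also have "\<dots> \<le> (\<Sum>k\<in>{1..K}. win_prob N q k)"
  proof (rule sum_mono)
    fix k assume "k \<in> {1..K}"
    then have "2 * k * q \<le> 2 * q * K" by (simp add: mult.commute mult_le_mono2)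
    then have "2 * k * q \<le> N" using assms(3) by (rule le_trans)
    then show "real k / (2 * real N) \<le> win_prob N q k"
      using assms(1,2) by (intro win_prob_ge) auto
  qed
  also have "\<dots> \<le> (\<Sum>k\<in>{1..N}. win_prob N q k)"
    using K_le assms by (intro sum_mono2 win_prob_nonneg) auto
  finally show ?thesis .
qed

lemma sum_win_prob_ge:
  assumes "1 \<le> q" "q \<le> N"
  shows "real N / (32 * (real q)\<^sup>2) \<le> (\<Sum>k\<in>{1..N}. win_prob N q k)"
proof -
  define K where "K = N div (2 * q)"
  have N_pos: "0 < real N" and q_pos: "0 < real q" using assms by auto
  have "N < 2 * q * (K + 1)"
    unfolding K_def using assms dividend_less_times_div[of "2 * q" N] by (simp add: algebra_simps)
  then have "real N < real (2 * q * (K + 1))" by (simp only: of_nat_less_iff)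
  then have N_lt: "real N < 2 * real q * (real K + 1)" by (simp add: algebra_simps)
  show ?thesis
  proof (cases "K = 0")
    case True
    then have "(real N)\<^sup>2 \<le> (2 * real q)\<^sup>2" using N_lt N_pos
      by (intro power_mono) auto
    then have "(real N)\<^sup>2 \<le> 4 * (real q)\<^sup>2" by (simp add: power_mult_distrib)
    then have "(real N)\<^sup>2 \<le> 32 * (real q)\<^sup>2" using zero_le_power2[of "real q"] by linarith
    then have "real N / (32 * (real q)\<^sup>2) \<le> 1 / N"
      using N_pos q_pos by (simp add: field_simps power2_eq_square)
    also have "\<dots> \<le> (\<Sum>k\<in>{1..N}. win_prob N q k)"
      using assms by (intro sum_win_prob_ge_inverse) auto
    finally show ?thesis .
  next
    case False
    have "2 * real q * (real K + 1) \<le> 2 * real q * (2 * real K)"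
      using False q_pos by (intro mult_left_mono) auto
    then have "real N < 4 * real q * real K" using N_lt by (simp add: algebra_simps)
    then have N_sq: "real N * real N \<le> (2 * real q * (real K + 1)) * (4 * real q * real K)"
      using N_lt N_pos by (intro mult_mono) auto
    have K_bound: "2 * q * K \<le> N"
      unfolding K_def by (metis mult.commute times_div_less_eq_dividend)
    have "real N / (32 * (real q)\<^sup>2) = real N * real N / (32 * (real q)\<^sup>2 * real N)"
      using N_pos by simp
    also have "\<dots> \<le> (2 * real q * (real K + 1)) * (4 * real q * real K) / (32 * (real q)\<^sup>2 * real N)"
      using N_sq N_pos by (intro divide_right_mono) auto
    also have "\<dots> = real K * (real K + 1) / (4 * real N)"
      using N_pos q_pos by (simp add: field_simps power2_eq_square)
    also have "\<dots> \<le> (\<Sum>k\<in>{1..N}. win_prob N q k)"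
      using assms K_bound by (rule sum_win_prob_ge_triangular)
    finally show ?thesis .
  qed
qed

lemma measure_replicate_pmf_lists_subset:
  "measure_pmf.prob (replicate_pmf k p) {xs. set xs \<subseteq> S} = measure_pmf.prob p S ^ k"
proof (induction k)
  case 0
  then show ?case by simp
next
  case (Suc k)
  let ?R = "replicate_pmf k p"
  have "replicate_pmf (Suc k) p = bind_pmf p (\<lambda>x. map_pmf (Cons x) ?R)"
    by (simp add: map_pmf_def)
  then have "emeasure (measure_pmf (replicate_pmf (Suc k) p)) {xs. set xs \<subseteq> S}
      = (\<integral>\<^sup>+x. indicator S x * emeasure (measure_pmf ?R) {xs. set xs \<subseteq> S} \<partial>p)"
    by (auto intro!: nn_integral_cong simp: vimage_def split: split_indicator)
  also have "\<dots> = emeasure (measure_pmf p) S * emeasure (measure_pmf ?R) {xs. set xs \<subseteq> S}"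
    by (simp add: nn_integral_multc)
  finally show ?case
    using Suc.IH by (simp add: measure_pmf.emeasure_eq_measure flip: ennreal_mult)
qed

lemma measure_replicate_pmf_lists_subset_member:
  assumes "x \<in> S"
  shows "measure_pmf.prob (replicate_pmf k p) {xs. set xs \<subseteq> S \<and> x \<in> set xs}
    = measure_pmf.prob p S ^ k - measure_pmf.prob p (S - {x}) ^ k"
proof -
  have "{xs. set xs \<subseteq> S \<and> x \<in> set xs} = {xs. set xs \<subseteq> S} - {xs. set xs \<subseteq> S - {x}}"
    using assms by auto
  then have "measure_pmf.prob (replicate_pmf k p) {xs. set xs \<subseteq> S \<and> x \<in> set xs}
      = measure_pmf.prob (replicate_pmf k p) {xs. set xs \<subseteq> S}
        - measure_pmf.prob (replicate_pmf k p) {xs. set xs \<subseteq> S - {x}}"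
    by (simp only:) (rule measure_pmf.finite_measure_Diff; auto)
  then show ?thesis by (simp only: measure_replicate_pmf_lists_subset)
qed

lemma arg_min_list_eq_minimal:
  assumes "inj_on f A" "set xs \<subseteq> A" "x \<in> set xs" "\<forall>y\<in>set xs. f x \<le> f y"
  shows "arg_min_list f xs = x"
proof -
  have ne: "xs \<noteq> []" using assms(3) by auto
  have "f (arg_min_list f xs) = Min (f ` set xs)" by (rule f_arg_min_list_f[OF ne])
  also have "\<dots> = f x" using assms(3,4) by (intro Min_eqI) auto
  finally have "f (arg_min_list f xs) = f x" .
  moreover have "arg_min_list f xs \<in> set xs" by (rule arg_min_list_in[OF ne])
  ultimately show ?thesis using assms(1-3) by (meson inj_onD subsetD)
qed

lemma pmf_stoch_tournament:
  assumes "1 \<le> N"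
  shows "pmf (stoch_tournament N \<pi>) i = (\<Sum>k\<in>{1..N}.
    measure_pmf.prob (replicate_pmf k (pmf_of_set {1..N})) {xs. arg_min_list \<pi> xs = i}) / N"
proof -
  have "stoch_tournament N \<pi> = bind_pmf (pmf_of_set {1..N})
      (\<lambda>k. map_pmf (arg_min_list \<pi>) (replicate_pmf k (pmf_of_set {1..N})))"
    by (simp add: stoch_tournament_def map_pmf_def)
  then show ?thesis
    using assms by (simp add: pmf_bind integral_pmf_of_set pmf_map vimage_def)
qed

lemma card_bij_betw_upper_set:
  assumes bij: "bij_betw \<pi> {1..N} {1..N}" and i: "i \<in> {1..N}"
  shows "card {j\<in>{1..N}. \<pi> i \<le> \<pi> j} = N + 1 - \<pi> i"
proof -
  let ?S = "{j\<in>{1..N}. \<pi> i \<le> \<pi> j}"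
  have pi_i: "\<pi> i \<in> {1..N}" using bij_betwE[OF bij] i by blast
  have "\<pi> ` ?S = {\<pi> i..N}"
  proof
    show "\<pi> ` ?S \<subseteq> {\<pi> i..N}" using bij by (auto dest: bij_betwE)
    show "{\<pi> i..N} \<subseteq> \<pi> ` ?S"
    proof
      fix y assume y: "y \<in> {\<pi> i..N}"
      then have "y \<in> \<pi> ` {1..N}" using pi_i bij_betw_imp_surj_on[OF bij] by auto
      with y show "y \<in> \<pi> ` ?S" by auto
    qed
  qed
  moreover have "?S \<subseteq> {1..N}" by auto
  ultimately have "bij_betw \<pi> ?S {\<pi> i..N}" using bij_betw_subset[OF bij] by blast
  then show ?thesis by (simp add: bij_betw_same_card)
qed

lemma pmf_stoch_tournament_ge:
  assumes bij: "bij_betw \<pi> {1..N} {1..N}" and i: "i \<in> {1..N}"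
  shows "(\<Sum>k\<in>{1..N}. win_prob N (\<pi> i) k) / N \<le> pmf (stoch_tournament N \<pi>) i"
proof -
  define U where "U = pmf_of_set {1..N}"
  define S where "S = {j\<in>{1..N}. \<pi> i \<le> \<pi> j}"
  have i_S: "i \<in> S" using i by (simp add: S_def)
  have pi_i: "\<pi> i \<in> {1..N}" using bij_betwE[OF bij] i by blast
  have S_sub: "S \<subseteq> {1..N}" by (auto simp: S_def)
  have card_S: "card S = N + 1 - \<pi> i"
    unfolding S_def using bij i by (rule card_bij_betw_upper_set)
  have prob_U: "measure_pmf.prob U A = card ({1..N} \<inter> A) / N" for A
    using i unfolding U_def by (subst measure_pmf_of_set) auto
  have prob_S: "measure_pmf.prob U S = (real N + 1 - \<pi> i) / N"
    using prob_U[of S] card_S pi_i S_sub by (simp add: Int_absorb1 of_nat_diff)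
  have prob_S_i: "measure_pmf.prob U (S - {i}) = (real N - \<pi> i) / N"
  proof -
    have "{1..N} \<inter> (S - {i}) = S - {i}" using S_sub by auto
    then show ?thesis using prob_U[of "S - {i}"] card_S pi_i i_S finite_subset[OF S_sub]
      by (simp add: card_Diff_singleton of_nat_diff)
  qed
  have win: "win_prob N (\<pi> i) k \<le> measure_pmf.prob (replicate_pmf k U) {xs. arg_min_list \<pi> xs = i}" for k
  proof -
    have "win_prob N (\<pi> i) k = measure_pmf.prob (replicate_pmf k U) {xs. set xs \<subseteq> S \<and> i \<in> set xs}"
      unfolding win_prob_def measure_replicate_pmf_lists_subset_member[OF i_S] prob_S prob_S_i ..
    also have "\<dots> \<le> measure_pmf.prob (replicate_pmf k U) {xs. arg_min_list \<pi> xs = i}"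
    proof (rule measure_pmf.finite_measure_mono)
      have "inj_on \<pi> {1..N}" using bij by (rule bij_betw_imp_inj_on)
      then show "{xs. set xs \<subseteq> S \<and> i \<in> set xs} \<subseteq> {xs. arg_min_list \<pi> xs = i}"
        using S_sub by (auto intro!: arg_min_list_eq_minimal simp: S_def)
    qed simp
    finally show ?thesis .
  qed
  have "(\<Sum>k\<in>{1..N}. win_prob N (\<pi> i) k) / N
      \<le> (\<Sum>k\<in>{1..N}. measure_pmf.prob (replicate_pmf k U) {xs. arg_min_list \<pi> xs = i}) / N"
    by (intro divide_right_mono sum_mono win) auto
  also have "\<dots> = pmf (stoch_tournament N \<pi>) i"
    using i unfolding U_def by (simp add: pmf_stoch_tournament)
  finally show ?thesis .
qed

lemma pmf_stoch_tournament_ge_inverse_square: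
  assumes bij: "bij_betw \<pi> {1..N} {1..N}" and i: "i \<in> {1..N}"
  shows "1 / (real N)\<^sup>2 \<le> pmf (stoch_tournament N \<pi>) i"
proof -
  have "\<pi> i \<le> N" using bij_betwE[OF bij] i by auto
  then have "(1 / N) / N \<le> (\<Sum>k\<in>{1..N}. win_prob N (\<pi> i) k) / N"
    using i by (intro divide_right_mono sum_win_prob_ge_inverse) auto
  also have "\<dots> \<le> pmf (stoch_tournament N \<pi>) i" using bij i by (rule pmf_stoch_tournament_ge)
  finally show ?thesis by (simp add: power2_eq_square)
qed

lemma pmf_stoch_tournament_ge_position:
  assumes bij: "bij_betw \<pi> {1..N} {1..N}" and i: "i \<in> {1..N}"
  shows "1 / (32 * (real (\<pi> i))\<^sup>2) \<le> pmf (stoch_tournament N \<pi>) i"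
proof -
  have pi_i: "\<pi> i \<in> {1..N}" using bij_betwE[OF bij] i by blast
  then have "1 / (32 * (real (\<pi> i))\<^sup>2) = (real N / (32 * (real (\<pi> i))\<^sup>2)) / N" by simp
  also have "\<dots> \<le> (\<Sum>k\<in>{1..N}. win_prob N (\<pi> i) k) / N"
    using pi_i by (intro divide_right_mono sum_win_prob_ge) auto
  also have "\<dots> \<le> pmf (stoch_tournament N \<pi>) i" using bij i by (rule pmf_stoch_tournament_ge)
  finally show ?thesis .
qed

theorem lemma1:
  shows "(\<forall>(N::nat) (rk::nat \<Rightarrow> nat) (cdist::nat \<Rightarrow> real) (\<pi>::nat \<Rightarrow> nat).
            N \<ge> 1 \<longrightarrow> bij_betw \<pi> {1..N} {1..N} \<longrightarrow>
            (\<forall>i\<in>{1..N}. \<forall>j\<in>{1..N}. i \<noteq> j \<longrightarrow> crowded_better rk cdist i j \<longrightarrow> \<pi> i < \<pi> j) \<longrightarrow>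
            (\<forall>i\<in>{1..N}. pmf (stoch_tournament N \<pi>) i \<ge> 1 / (real N)^2))
       \<and> (\<forall>c::real. c \<ge> 1 \<longrightarrow> (\<exists>\<delta>>0.
            \<forall>(N::nat) (rk::nat \<Rightarrow> nat) (cdist::nat \<Rightarrow> real) (\<pi>::nat \<Rightarrow> nat).
            N \<ge> 1 \<longrightarrow> bij_betw \<pi> {1..N} {1..N} \<longrightarrow>
            (\<forall>i\<in>{1..N}. \<forall>j\<in>{1..N}. i \<noteq> j \<longrightarrow> crowded_better rk cdist i j \<longrightarrow> \<pi> i < \<pi> j) \<longrightarrow>
            (\<forall>i\<in>{1..N}. real (\<pi> i) \<le> c \<longrightarrow> pmf (stoch_tournament N \<pi>) i \<ge> \<delta>)))"
  \<comment> \<open>The bounds hold for every bijection \<open>\<pi>\<close>.\<close>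
proof (intro conjI allI impI ballI)
  fix N :: nat and \<pi> :: "nat \<Rightarrow> nat" and i
  assume "bij_betw \<pi> {1..N} {1..N}" "i \<in> {1..N}"
  then show "1 / (real N)^2 \<le> pmf (stoch_tournament N \<pi>) i"
    by (rule pmf_stoch_tournament_ge_inverse_square)
next
  fix c :: real
  assume c: "c \<ge> 1"
  show "\<exists>\<delta>>0. \<forall>(N::nat) (rk::nat \<Rightarrow> nat) (cdist::nat \<Rightarrow> real) (\<pi>::nat \<Rightarrow> nat).
            N \<ge> 1 \<longrightarrow> bij_betw \<pi> {1..N} {1..N} \<longrightarrow>
            (\<forall>i\<in>{1..N}. \<forall>j\<in>{1..N}. i \<noteq> j \<longrightarrow> crowded_better rk cdist i j \<longrightarrow> \<pi> i < \<pi> j) \<longrightarrow>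
            (\<forall>i\<in>{1..N}. real (\<pi> i) \<le> c \<longrightarrow> pmf (stoch_tournament N \<pi>) i \<ge> \<delta>)"
  proof (intro exI[of _ "1 / (32 * c\<^sup>2)"] conjI allI impI ballI)
    show "0 < 1 / (32 * c\<^sup>2)" using c by simp
  next
    fix N :: nat and \<pi> :: "nat \<Rightarrow> nat" and i
    assume bij: "bij_betw \<pi> {1..N} {1..N}" and i: "i \<in> {1..N}" and pi_c: "real (\<pi> i) \<le> c"
    have "1 \<le> real (\<pi> i)" using bij_betwE[OF bij] i by force
    then have "1 / (32 * c\<^sup>2) \<le> 1 / (32 * (real (\<pi> i))\<^sup>2)"
      using pi_c by (intro divide_left_mono mult_left_mono power_mono) auto
    also have "\<dots> \<le> pmf (stoch_tournament N \<pi>) i"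
      using bij i by (rule pmf_stoch_tournament_ge_position)
    finally show "1 / (32 * c\<^sup>2) \<le> pmf (stoch_tournament N \<pi>) i" .
  qed
qed

end
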